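(* Let $(\nu_l)_{l\ge1}$ be probability measures on $(X,\mathcal{A})$, and $R_l:X\to\mathfrak{E}$, $R_l':X\to\mathfrak{E}'$, $l\ge1$, Borel maps into compact metric spaces $\mathfrak{E}$ and $\mathfrak{E}'$. Let $(R,R')$ be a random element of $\mathfrak{E}\times\mathfrak{E}'$ such that $(R_l,R_l')\overset{\nu_l}{\Longrightarrow}(R,R')$ as $l\to\infty$. Assume there is a $\pi$-system $\mathcal{B}^\pi_{\mathfrak{E}}$ generating the Borel $\sigma$-algebra of $\mathfrak{E}$ such that for all $E\in\mathcal{B}^\pi_{\mathfrak{E}}$ we have $\Pr[R\in\partial E]=0$ and, in case $\Pr[R\in E]>0$, $R_l'\overset{(\nu_l)_{\{R_l\in E\}}}{\Longrightarrow}R'$ as $l\to\infty$. Then $R$ and $R'$ are independent.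
   Context: $\nu_B:=\nu(B\cap\cdot)/\nu(B)$ denotes the conditional measure. $R_l\overset{\nu_l}{\Longrightarrow}R$ means the laws $\nu_l\circ R_l^{-1}$ converge weakly to the law of $R$. $\partial E$ is the topological boundary. *)

theory Defs
  imports "HOL-Probability.Probability"
begin

definition weak_conv_seq :: "(nat \<Rightarrow> 'a::metric_space measure) \<Rightarrow> 'a measure \<Rightarrow> bool" where
  "weak_conv_seq \<mu>s \<mu> \<longleftrightarrow>
     (\<forall>f :: 'a \<Rightarrow> real. continuous_on UNIV f \<and> bounded (range f) \<longrightarrow>
        (\<lambda>n. integral\<^sup>L (\<mu>s n) f) \<longlonglongrightarrow> integral\<^sup>L \<mu> f)"

definition cond_measure :: "'a measure \<Rightarrow> 'a set \<Rightarrow> 'a measure" where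
  "cond_measure M B = density M (\<lambda>x. indicator B x / emeasure M B)"

end

(* For E in the pi-system, {R \<in> E} is a continuity event of the limit law, so sandwiching
   the indicator of E between continuous functions shows that the integrals of
   1_E(R_l) g(R'_l) converge to E[1_E(R) g(R')] for bounded continuous g.  Dividing by
   \<nu>_l(R_l \<in> E) \<longrightarrow> P(R \<in> E) > 0 turns the left-hand sides into integrals of g against the
   conditional laws of R'_l, which converge to E[g(R')] by hypothesis.  Hence
   E[1_E(R) g(R')] = P(R \<in> E) E[g(R')]; approximating indicators of closed sets F by such g
   gives P(R \<in> E, R' \<in> F) = P(R \<in> E) P(R' \<in> F), and Dynkin's pi-lambda theorem extends
   this to the generated sigma-algebras. *)

theory Submission
  imports Defs
begin

section \<open>Continuous approximation of indicator functions\<close>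

text \<open>The case split is needed because \<open>infdist x {} = 0\<close>.\<close>
definition outer_cutoff :: "'a::metric_space set \<Rightarrow> nat \<Rightarrow> 'a \<Rightarrow> real" where
  "outer_cutoff S k x = (if S = {} then 0 else max 0 (1 - real k * infdist x S))"

definition inner_cutoff :: "'a::metric_space set \<Rightarrow> nat \<Rightarrow> 'a \<Rightarrow> real" where
  "inner_cutoff S k x = 1 - outer_cutoff (- S) k x"

lemma continuous_on_outer_cutoff [continuous_intros]:
  "continuous_on A f \<Longrightarrow> continuous_on A (\<lambda>x. outer_cutoff S k (f x))"
  unfolding outer_cutoff_def by (cases "S = {}") (auto intro!: continuous_intros)

lemma continuous_on_inner_cutoff [continuous_intros]:
  "continuous_on A f \<Longrightarrow> continuous_on A (\<lambda>x. inner_cutoff S k (f x))"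
  unfolding inner_cutoff_def by (intro continuous_intros)

lemma outer_cutoff_nonneg: "0 \<le> outer_cutoff S k x"
  and outer_cutoff_le_one: "outer_cutoff S k x \<le> 1"
  unfolding outer_cutoff_def using infdist_nonneg[of x S] by auto

lemma inner_cutoff_nonneg: "0 \<le> inner_cutoff S k x"
  and inner_cutoff_le_one: "inner_cutoff S k x \<le> 1"
  unfolding inner_cutoff_def using outer_cutoff_nonneg outer_cutoff_le_one by auto

lemma outer_cutoff_closure:
  assumes "x \<in> closure S"
  shows "outer_cutoff S k x = 1"
proof -
  from assms have "S \<noteq> {}" by auto
  with assms show ?thesis by (simp add: outer_cutoff_def in_closure_iff_infdist_zero)
qed

lemma indicator_le_outer_cutoff: "indicator S x \<le> outer_cutoff S k x"
  using closure_subset[of S] outer_cutoff_closure[of x S k] outer_cutoff_nonneg[of S k x]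
  by (auto simp: indicator_def)

lemma inner_cutoff_le_indicator: "inner_cutoff S k x \<le> indicator S x"
  using indicator_le_outer_cutoff[of "- S" x k] outer_cutoff_nonneg[of "- S" k x]
  by (auto simp: inner_cutoff_def indicator_def split: if_splits)

lemma outer_cutoff_tendsto: "(\<lambda>k. outer_cutoff S k x) \<longlonglongrightarrow> indicator (closure S) x"
proof (cases "x \<in> closure S")
  case True
  then show ?thesis by (simp add: outer_cutoff_closure)
next
  case False
  obtain n where "\<And>k. n \<le> k \<Longrightarrow> outer_cutoff S k x = 0"
  proof (cases "S = {}")
    case True
    then show ?thesis using that by (simp add: outer_cutoff_def)
  next
    case nonempty: False
    with False have pos: "infdist x S > 0"
      using in_closure_iff_infdist_zero[of S x] infdist_nonneg[of x S] by auto
    obtain n :: nat where n: "1 / infdist x S < n"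
      using reals_Archimedean2 by blast
    have "1 < real k * infdist x S" if "n \<le> k" for k
    proof -
      have "1 < real n * infdist x S"
        using n pos by (simp add: field_simps)
      also have "\<dots> \<le> real k * infdist x S"
        using that pos by (intro mult_right_mono) auto
      finally show ?thesis .
    qed
    then show ?thesis using nonempty by (intro that[of n]) (simp add: outer_cutoff_def)
  qed
  then show ?thesis
    using False by (auto intro: tendsto_eventually eventually_sequentiallyI[of n])
qed

lemma cutoff_gap_tendsto:
  "(\<lambda>k. outer_cutoff S k x - inner_cutoff S k x) \<longlonglongrightarrow> indicator (frontier S) x"
proof -
  have "(\<lambda>k. outer_cutoff S k x - (1 - outer_cutoff (- S) k x))
      \<longlonglongrightarrow> indicator (closure S) x - (1 - indicator (closure (- S)) x)"
    by (intro tendsto_intros outer_cutoff_tendsto)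
  moreover have "indicator (closure S) x - (1 - indicator (closure (- S)) x)
      = (indicator (frontier S) x :: real)"
    using interior_subset[of S] closure_subset[of S]
    by (auto simp: indicator_def frontier_def closure_complement)
  ultimately show ?thesis
    unfolding inner_cutoff_def by simp
qed

section \<open>Weak convergence and continuity sets\<close>

lemma LIMSEQ_by_approximation:
  fixes a :: "nat \<Rightarrow> real" and b c :: "nat \<Rightarrow> nat \<Rightarrow> real"
  assumes a_near_b: "\<And>k l. \<bar>a l - b k l\<bar> \<le> c k l" and A_near_B: "\<And>k. \<bar>A - B k\<bar> \<le> C k"
    and b: "\<And>k. (\<lambda>l. b k l) \<longlonglongrightarrow> B k" and c: "\<And>k. (\<lambda>l. c k l) \<longlonglongrightarrow> C k"
    and C: "C \<longlonglongrightarrow> 0"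
  shows "a \<longlonglongrightarrow> A"
proof (rule tendstoI)
  fix r :: real assume "0 < r"
  then obtain k where k: "C k < r/4"
    using order_tendstoD(2)[OF C, of "r/4"] by (auto simp: eventually_sequentially)
  have "\<forall>\<^sub>F l in sequentially. dist (b k l) (B k) < r/4 \<and> dist (c k l) (C k) < r/4"
    using \<open>0 < r\<close> by (intro eventually_conj tendstoD[OF b] tendstoD[OF c]) simp_all
  then show "\<forall>\<^sub>F l in sequentially. dist (a l) A < r"
  proof eventually_elim
    case (elim l)
    then show ?case
      using a_near_b[of l k] A_near_B[of k] k unfolding dist_real_def by linarith
  qed
qed

lemma weak_conv_seqD:
  fixes f :: "'a::metric_space \<Rightarrow> real"
  assumes "weak_conv_seq \<mu>s \<mu>" "continuous_on UNIV f" "bounded (range f)"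
  shows "(\<lambda>n. integral\<^sup>L (\<mu>s n) f) \<longlonglongrightarrow> integral\<^sup>L \<mu> f"
  using assms unfolding weak_conv_seq_def by simp

lemma (in finite_measure) integrable_bounded_range:
  fixes f :: "'a \<Rightarrow> real"
  assumes "f \<in> borel_measurable M" "bounded (range f)"
  shows "integrable M f"
proof -
  from assms(2) obtain K where "\<And>x. \<bar>f x\<bar> \<le> K"
    unfolding bounded_iff by auto
  with assms(1) show ?thesis
    by (intro integrable_const_bound[where B=K]) simp_all
qed

lemma (in finite_measure) abs_integral_diff_le:
  fixes f g h :: "'a \<Rightarrow> real"
  assumes "f \<in> borel_measurable M" "g \<in> borel_measurable M" "h \<in> borel_measurable M"
    and "bounded (range f)" "bounded (range g)" "bounded (range h)"
    and "\<And>x. \<bar>f x - g x\<bar> \<le> h x"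
  shows "\<bar>integral\<^sup>L M f - integral\<^sup>L M g\<bar> \<le> integral\<^sup>L M h"
proof -
  have "integrable M f" "integrable M g" "integrable M h"
    using assms by (simp_all add: integrable_bounded_range)
  then have "\<bar>integral\<^sup>L M f - integral\<^sup>L M g\<bar> = \<bar>\<integral>x. f x - g x \<partial>M\<bar>"
    by simp
  also have "\<dots> \<le> (\<integral>x. \<bar>f x - g x\<bar> \<partial>M)"
    using integral_norm_bound[of M "\<lambda>x. f x - g x"] by simp
  also have "\<dots> \<le> integral\<^sup>L M h"
    using \<open>integrable M f\<close> \<open>integrable M g\<close> \<open>integrable M h\<close> assms(7)
    by (intro integral_mono) auto
  finally show ?thesis .
qed

lemma integral_indicator_comp:
  "(\<integral>x. indicator A (X x) \<partial>M) = (measure M {x \<in> space M. X x \<in> A} :: real)"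
proof -
  have "(\<integral>x. indicator A (X x) \<partial>M) = (\<integral>x. indicator {x \<in> space M. X x \<in> A} x \<partial>M :: real)"
    by (rule Bochner_Integration.integral_cong) (auto simp: indicator_def)
  then show ?thesis
    by (simp add: Int_absorb2 subset_iff)
qed

lemma weak_conv_seq_integral_approx:
  fixes \<mu>s :: "nat \<Rightarrow> 'a::metric_space measure" and h :: "'a \<Rightarrow> real"
    and a e :: "nat \<Rightarrow> 'a \<Rightarrow> real"
  assumes conv: "weak_conv_seq \<mu>s \<mu>"
    and prob: "\<And>n. prob_space (\<mu>s n)" "prob_space \<mu>"
    and sets: "\<And>n. sets (\<mu>s n) = sets borel" "sets \<mu> = sets borel"
    and h: "h \<in> borel_measurable borel" "bounded (range h)"
    and a: "\<And>k. continuous_on UNIV (a k)" "\<And>k. bounded (range (a k))"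
    and e: "\<And>k. continuous_on UNIV (e k)" "\<And>k. bounded (range (e k))"
    and approx: "\<And>k x. \<bar>h x - a k x\<bar> \<le> e k x"
    and error: "(\<lambda>k. integral\<^sup>L \<mu> (e k)) \<longlonglongrightarrow> 0"
  shows "(\<lambda>n. integral\<^sup>L (\<mu>s n) h) \<longlonglongrightarrow> integral\<^sup>L \<mu> h"
proof -
  have bound: "\<bar>integral\<^sup>L \<nu> h - integral\<^sup>L \<nu> (a k)\<bar> \<le> integral\<^sup>L \<nu> (e k)"
    if "prob_space \<nu>" "sets \<nu> = sets borel" for \<nu> k
  proof -
    have borel: "f \<in> borel_measurable \<nu>" if "f \<in> borel_measurable borel" for f :: "'a \<Rightarrow> real"
      using that unfolding measurable_cong_sets[OF \<open>sets \<nu> = sets borel\<close> refl] .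
    interpret prob_space \<nu> by fact
    have "a k \<in> borel_measurable \<nu>" "e k \<in> borel_measurable \<nu>"
      using borel[OF borel_measurable_continuous_onI[OF a(1)]]
        borel[OF borel_measurable_continuous_onI[OF e(1)]] .
    then show ?thesis
      by (intro abs_integral_diff_le borel[OF h(1)] h(2) a(2) e(2) approx)
  qed
  show ?thesis
  proof (rule LIMSEQ_by_approximation)
    show "\<bar>integral\<^sup>L (\<mu>s n) h - integral\<^sup>L (\<mu>s n) (a k)\<bar> \<le> integral\<^sup>L (\<mu>s n) (e k)" for k n
      using prob(1) sets(1) by (rule bound)
    show "\<bar>integral\<^sup>L \<mu> h - integral\<^sup>L \<mu> (a k)\<bar> \<le> integral\<^sup>L \<mu> (e k)" for k
      using prob(2) sets(2) by (rule bound)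
    show "(\<lambda>n. integral\<^sup>L (\<mu>s n) (a k)) \<longlonglongrightarrow> integral\<^sup>L \<mu> (a k)" for k
      using conv a by (rule weak_conv_seqD)
    show "(\<lambda>n. integral\<^sup>L (\<mu>s n) (e k)) \<longlonglongrightarrow> integral\<^sup>L \<mu> (e k)" for k
      using conv e by (rule weak_conv_seqD)
  qed (fact error)
qed

text \<open>Makes \<open>borel_prod\<close> available to the measurability prover, so that it can treat
  \<open>fst\<close> and \<open>snd\<close> on the Borel space of a product.\<close>
lemma measurable_ident_borel_prod [measurable]:
  "(\<lambda>p. p) \<in> (borel :: ('a::second_countable_topology \<times> 'b::second_countable_topology) measure)
    \<rightarrow>\<^sub>M borel \<Otimes>\<^sub>M borel"
  by (simp add: borel_prod)

lemma integral_cutoff_gap_tendsto: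
  fixes \<mu> :: "('a::{metric_space, second_countable_topology} \<times>
      'b::{metric_space, second_countable_topology}) measure"
  assumes "finite_measure \<mu>" and sets: "sets \<mu> = sets borel"
  shows "(\<lambda>k. \<integral>p. outer_cutoff E k (fst p) - inner_cutoff E k (fst p) \<partial>\<mu>)
    \<longlonglongrightarrow> measure \<mu> (frontier E \<times> UNIV)"
proof -
  note sets[measurable_cong]
  have [measurable]: "outer_cutoff E k \<in> borel_measurable borel" "inner_cutoff E k \<in> borel_measurable borel"
    for k by (intro borel_measurable_continuous_onI continuous_intros)+
  have [measurable]: "frontier E \<in> sets borel"
    by (simp add: borel_closed)
  have "(\<lambda>k. \<integral>p. outer_cutoff E k (fst p) - inner_cutoff E k (fst p) \<partial>\<mu>)
      \<longlonglongrightarrow> (\<integral>p. indicator (frontier E) (fst p) \<partial>\<mu>)"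
  proof (rule integral_dominated_convergence[where w="\<lambda>_. 1"])
    show "AE p in \<mu>. (\<lambda>k. outer_cutoff E k (fst p) - inner_cutoff E k (fst p))
        \<longlonglongrightarrow> indicator (frontier E) (fst p)"
      by (intro AE_I2 cutoff_gap_tendsto)
    show "AE p in \<mu>. norm (outer_cutoff E k (fst p) - inner_cutoff E k (fst p)) \<le> 1" for k
      using inner_cutoff_le_indicator[of E k] indicator_le_outer_cutoff[of E _ k]
        outer_cutoff_le_one[of E k] inner_cutoff_nonneg[of E k]
      by (intro AE_I2) (smt (verit) real_norm_def)
    show "integrable \<mu> (\<lambda>_. 1)"
      using \<open>finite_measure \<mu>\<close> by (simp add: finite_measure.integrable_const)
  qed measurable
  moreover have "{p \<in> space \<mu>. fst p \<in> frontier E} = frontier E \<times> UNIV"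
    using sets_eq_imp_space_eq[OF sets] by auto
  ultimately show ?thesis
    by (simp add: integral_indicator_comp)
qed

lemma weak_conv_seq_integral_indicator_mult:
  fixes \<mu>s :: "nat \<Rightarrow> ('a::{metric_space, second_countable_topology} \<times>
      'b::{metric_space, second_countable_topology}) measure" and g :: "'b \<Rightarrow> real"
  assumes conv: "weak_conv_seq \<mu>s \<mu>"
    and prob: "\<And>n. prob_space (\<mu>s n)" "prob_space \<mu>"
    and sets: "\<And>n. sets (\<mu>s n) = sets borel" "sets \<mu> = sets borel"
    and [measurable]: "E \<in> sets borel" and null: "measure \<mu> (frontier E \<times> UNIV) = 0"
    and g: "continuous_on UNIV g" "bounded (range g)"
  shows "(\<lambda>n. \<integral>p. indicator E (fst p) * g (snd p) \<partial>\<mu>s n)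
    \<longlonglongrightarrow> (\<integral>p. indicator E (fst p) * g (snd p) \<partial>\<mu>)"
proof -
  obtain K where K: "\<And>y. \<bar>g y\<bar> \<le> K"
    using g(2) unfolding bounded_iff by auto
  then have "0 \<le> K"
    by (meson abs_ge_zero order_trans)
  have [measurable]: "g \<in> borel_measurable borel"
    using g(1) by (rule borel_measurable_continuous_onI)
  define gap where "gap k x = outer_cutoff E k x - inner_cutoff E k x" for k x
  have gap_bounds: "0 \<le> gap k x" "gap k x \<le> 1" for k x
    using inner_cutoff_le_indicator[of E k x] indicator_le_outer_cutoff[of E x k]
      outer_cutoff_le_one[of E k x] inner_cutoff_nonneg[of E k x]
    by (auto simp: gap_def)
  have approx: "\<bar>indicator E (fst p) * g (snd p) - inner_cutoff E k (fst p) * g (snd p)\<bar>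
      \<le> K * gap k (fst p)" for k p
  proof -
    have "\<bar>indicator E (fst p) * g (snd p) - inner_cutoff E k (fst p) * g (snd p)\<bar>
        = (indicator E (fst p) - inner_cutoff E k (fst p)) * \<bar>g (snd p)\<bar>"
      using inner_cutoff_le_indicator[of E k "fst p"]
      by (simp add: left_diff_distrib[symmetric] abs_mult)
    also have "\<dots> \<le> gap k (fst p) * K"
      using inner_cutoff_le_indicator[of E k "fst p"] indicator_le_outer_cutoff[of E "fst p" k]
        K[of "snd p"] gap_bounds[of k "fst p"]
      by (intro mult_mono) (auto simp: gap_def)
    finally show ?thesis
      by (simp add: mult.commute)
  qed
  have "(\<lambda>k. \<integral>p. K * gap k (fst p) \<partial>\<mu>) \<longlonglongrightarrow> K * measure \<mu> (frontier E \<times> UNIV)"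
    unfolding gap_def integral_mult_right_zero using prob(2) sets(2)
    by (intro tendsto_mult_left integral_cutoff_gap_tendsto) (simp_all add: prob_space_def)
  then have error: "(\<lambda>k. \<integral>p. K * gap k (fst p) \<partial>\<mu>) \<longlonglongrightarrow> 0"
    using null by simp
  have scaled_bound: "\<bar>u * g y\<bar> \<le> K" "\<bar>K * u\<bar> \<le> K" if "0 \<le> u" "u \<le> 1" for u y
    using K[of y] that \<open>0 \<le> K\<close>
    by (simp_all add: abs_mult mult_left_le order_trans[OF mult_left_le_one_le])
  show ?thesis
  proof (rule weak_conv_seq_integral_approx[OF conv prob sets _ _ _ _ _ _ approx error])
    show "(\<lambda>p. indicator E (fst p) * g (snd p)) \<in> borel_measurable borel"
      by measurable
    show "bounded (range (\<lambda>p. indicator E (fst p) * g (snd p)))"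
      "bounded (range (\<lambda>p. inner_cutoff E k (fst p) * g (snd p)))" for k
      unfolding bounded_iff using inner_cutoff_nonneg inner_cutoff_le_one
      by (intro exI[of _ K]; auto intro!: scaled_bound(1))+
    show "bounded (range (\<lambda>p. K * gap k (fst p)))" for k
      unfolding bounded_iff using gap_bounds
      by (intro exI[of _ K]) (auto intro!: scaled_bound(2))
    show "continuous_on UNIV (\<lambda>p. inner_cutoff E k (fst p) * g (snd p))"
      "continuous_on UNIV (\<lambda>p. K * gap k (fst p))" for k
      unfolding gap_def by (auto intro!: continuous_intros continuous_on_compose2[OF g(1)])
  qed
qed

lemma weak_conv_seq_distr_integral_indicator_mult:
  fixes \<nu> :: "nat \<Rightarrow> 'x measure"
    and Xs :: "nat \<Rightarrow> 'x \<Rightarrow> 'e::{metric_space, second_countable_topology}"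
    and Ys :: "nat \<Rightarrow> 'x \<Rightarrow> 'f::{metric_space, second_countable_topology}"
    and X :: "'w \<Rightarrow> 'e" and Y :: "'w \<Rightarrow> 'f" and g :: "'f \<Rightarrow> real"
  assumes prob: "\<And>l. prob_space (\<nu> l)" "prob_space P"
    and [measurable]: "\<And>l. Xs l \<in> borel_measurable (\<nu> l)" "\<And>l. Ys l \<in> borel_measurable (\<nu> l)"
    and [measurable]: "X \<in> borel_measurable P" "Y \<in> borel_measurable P"
    and conv: "weak_conv_seq (\<lambda>l. distr (\<nu> l) borel (\<lambda>x. (Xs l x, Ys l x)))
                             (distr P borel (\<lambda>w. (X w, Y w)))"
    and [measurable]: "E \<in> sets borel"
    and boundary: "measure P {w \<in> space P. X w \<in> frontier E} = 0"
    and g: "continuous_on UNIV g" "bounded (range g)"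
  shows "(\<lambda>l. \<integral>x. indicator E (Xs l x) * g (Ys l x) \<partial>\<nu> l)
    \<longlonglongrightarrow> (\<integral>w. indicator E (X w) * g (Y w) \<partial>P)"
proof -
  have [measurable]: "g \<in> borel_measurable borel"
    using g(1) by (rule borel_measurable_continuous_onI)
  have null: "measure (distr P borel (\<lambda>w. (X w, Y w))) (frontier E \<times> UNIV) = 0"
    using boundary
    by (subst measure_distr) (auto simp: vimage_def Int_def conj_commute intro!: borel_closed closed_Times)
  have distr: "integral\<^sup>L (distr N borel (\<lambda>x. (U x, V x))) (\<lambda>p. indicator E (fst p) * g (snd p))
      = (\<integral>x. indicator E (U x) * g (V x) \<partial>N)"
    if [measurable]: "U \<in> borel_measurable N" "V \<in> borel_measurable N"
    for N :: "'a measure" and U :: "'a \<Rightarrow> 'e" and V :: "'a \<Rightarrow> 'f"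
    by (subst integral_distr) simp_all
  from weak_conv_seq_integral_indicator_mult[OF conv _ _ _ _ _ null g]
  show ?thesis
    using prob by (simp add: distr prob_space.prob_space_distr)
qed

section \<open>Conditioning and independence\<close>

lemma (in finite_measure) integral_cond_measure:
  fixes f :: "'a \<Rightarrow> real"
  assumes B: "B \<in> sets M" and pos: "measure M B > 0" and f: "f \<in> borel_measurable M"
  shows "(\<integral>x. f x \<partial>cond_measure M B) = (\<integral>x. indicator B x * f x \<partial>M) / measure M B"
proof -
  have density: "indicator B x / emeasure M B = ennreal (indicator B x / measure M B)" for x
    using pos divide_ennreal[of 1 "measure M B"] by (cases "x \<in> B") (auto simp: emeasure_eq_measure)
  have "(\<integral>x. f x \<partial>cond_measure M B) = (\<integral>x. (indicator B x / measure M B) *\<^sub>R f x \<partial>M)"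
    unfolding cond_measure_def density using B f pos by (subst integral_density) auto
  then show ?thesis
    by simp
qed

lemma (in prob_space) integral_distr_cond_measure:
  fixes X :: "'a \<Rightarrow> 'e::topological_space" and Y :: "'a \<Rightarrow> 'f::topological_space"
    and g :: "'f \<Rightarrow> real"
  assumes [measurable]: "X \<in> borel_measurable M" "Y \<in> borel_measurable M" "E \<in> sets borel"
    "g \<in> borel_measurable borel"
    and pos: "measure M {x \<in> space M. X x \<in> E} > 0"
  shows "integral\<^sup>L (distr (cond_measure M {x \<in> space M. X x \<in> E}) borel Y) g
    = (\<integral>x. indicator E (X x) * g (Y x) \<partial>M) / measure M {x \<in> space M. X x \<in> E}"
proof -
  have "integral\<^sup>L (distr (cond_measure M {x \<in> space M. X x \<in> E}) borel Y) g
      = (\<integral>x. g (Y x) \<partial>cond_measure M {x \<in> space M. X x \<in> E})"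
    by (subst integral_distr) (auto simp: cond_measure_def)
  also have "\<dots> = (\<integral>x. indicator {x \<in> space M. X x \<in> E} x * g (Y x) \<partial>M)
      / measure M {x \<in> space M. X x \<in> E}"
    using pos by (intro integral_cond_measure) auto
  also have "(\<integral>x. indicator {x \<in> space M. X x \<in> E} x * g (Y x) \<partial>M)
      = (\<integral>x. indicator E (X x) * g (Y x) \<partial>M)"
    by (intro Bochner_Integration.integral_cong) (auto simp: indicator_def)
  finally show ?thesis .
qed

lemma integral_indicator_mult_factorizes:
  fixes \<nu> :: "nat \<Rightarrow> 'x measure"
    and Rl :: "nat \<Rightarrow> 'x \<Rightarrow> 'e::{metric_space, second_countable_topology}"
    and Rl' :: "nat \<Rightarrow> 'x \<Rightarrow> 'f::{metric_space, second_countable_topology}"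
    and R :: "'w \<Rightarrow> 'e" and R' :: "'w \<Rightarrow> 'f" and g :: "'f \<Rightarrow> real"
  assumes prob_\<nu>: "\<And>l. prob_space (\<nu> l)" and prob_P: "prob_space P"
    and [measurable]: "\<And>l. Rl l \<in> borel_measurable (\<nu> l)" "\<And>l. Rl' l \<in> borel_measurable (\<nu> l)"
    and [measurable]: "R \<in> borel_measurable P" "R' \<in> borel_measurable P"
    and joint_conv: "weak_conv_seq (\<lambda>l. distr (\<nu> l) borel (\<lambda>x. (Rl l x, Rl' l x)))
                                   (distr P borel (\<lambda>w. (R w, R' w)))"
    and [measurable]: "E \<in> sets borel"
    and boundary: "measure P {w \<in> space P. R w \<in> frontier E} = 0"
    and cond_conv: "measure P {w \<in> space P. R w \<in> E} > 0 \<Longrightarrow>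
        weak_conv_seq (\<lambda>l. distr (cond_measure (\<nu> l) {x \<in> space (\<nu> l). Rl l x \<in> E}) borel (Rl' l))
                      (distr P borel R')"
    and g: "continuous_on UNIV g" "bounded (range g)"
  shows "(\<integral>w. indicator E (R w) * g (R' w) \<partial>P) = measure P {w \<in> space P. R w \<in> E} * (\<integral>w. g (R' w) \<partial>P)"
proof -
  interpret P: prob_space P by fact
  have [measurable]: "g \<in> borel_measurable borel"
    using g(1) by (rule borel_measurable_continuous_onI)
  have joint_lim: "(\<lambda>l. \<integral>x. indicator E (Rl l x) * h (Rl' l x) \<partial>\<nu> l)
      \<longlonglongrightarrow> (\<integral>w. indicator E (R w) * h (R' w) \<partial>P)"
    if "continuous_on UNIV h" "bounded (range h)" for h :: "'f \<Rightarrow> real"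
    using prob_\<nu> prob_P _ _ _ _ joint_conv _ boundary that
    by (rule weak_conv_seq_distr_integral_indicator_mult) measurable
  define p where "p = measure P {w \<in> space P. R w \<in> E}"
  define a where "a l = (\<integral>x. indicator E (Rl l x) * g (Rl' l x) \<partial>\<nu> l)" for l
  define m where "m l = measure (\<nu> l) {x \<in> space (\<nu> l). Rl l x \<in> E}" for l
  have m_lim: "m \<longlonglongrightarrow> p"
    using joint_lim[of "\<lambda>_. 1"] by (simp add: m_def[abs_def] p_def integral_indicator_comp)
  show ?thesis
  proof (cases "p = 0")
    case True
    then have "{w \<in> space P. R w \<in> E} \<in> null_sets P"
      by (auto simp: p_def P.emeasure_eq_measure)
    then have "AE w in P. indicator E (R w) = (0 :: real)"
      by (rule AE_I') (auto simp: indicator_def)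
    then have "(\<integral>w. indicator E (R w) * g (R' w) \<partial>P) = (\<integral>w. 0 \<partial>P)"
      by (intro integral_cong_AE) (measurable, auto elim: eventually_mono)
    with True show ?thesis by (simp add: p_def)
  next
    case False
    then have "p > 0"
      using measure_nonneg[of P] unfolding p_def by (metis less_eq_real_def)
    then have "\<forall>\<^sub>F l in sequentially. m l > 0"
      using m_lim by (rule order_tendstoD(1)[rotated])
    then have "\<forall>\<^sub>F l in sequentially.
        integral\<^sup>L (distr (cond_measure (\<nu> l) {x \<in> space (\<nu> l). Rl l x \<in> E}) borel (Rl' l)) g
        = a l / m l"
      by eventually_elim
        (simp add: a_def m_def prob_space.integral_distr_cond_measure[OF prob_\<nu>])
    moreover have "(\<lambda>l. integral\<^sup>L (distr (cond_measure (\<nu> l) {x \<in> space (\<nu> l). Rl l x \<in> E}) borel (Rl' l)) g)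
        \<longlonglongrightarrow> (\<integral>w. g (R' w) \<partial>P)"
      using weak_conv_seqD[OF cond_conv[folded p_def, OF \<open>p > 0\<close>] g] by (simp add: integral_distr)
    ultimately have "(\<lambda>l. a l / m l) \<longlonglongrightarrow> (\<integral>w. g (R' w) \<partial>P)"
      by (rule Lim_transform_eventually[rotated])
    moreover have "(\<lambda>l. a l / m l) \<longlonglongrightarrow> (\<integral>w. indicator E (R w) * g (R' w) \<partial>P) / p"
      using \<open>p > 0\<close> unfolding a_def by (intro tendsto_divide joint_lim g m_lim) auto
    ultimately show ?thesis
      using \<open>p > 0\<close> LIMSEQ_unique by (fastforce simp: p_def field_simps)
  qed
qed

lemma (in prob_space) prob_vimage_closed_factorizes:
  fixes X :: "'a \<Rightarrow> 'e::topological_space" and Y :: "'a \<Rightarrow> 'f::metric_space"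
  assumes [measurable]: "X \<in> borel_measurable M" "Y \<in> borel_measurable M" "E \<in> sets borel"
    and "closed F"
    and factor: "\<And>g. continuous_on UNIV g \<Longrightarrow> bounded (range g) \<Longrightarrow>
      (\<integral>x. indicator E (X x) * g (Y x) \<partial>M) = prob {x \<in> space M. X x \<in> E} * (\<integral>x. g (Y x) \<partial>M)"
  shows "prob {x \<in> space M. X x \<in> E \<and> Y x \<in> F}
    = prob {x \<in> space M. X x \<in> E} * prob {x \<in> space M. Y x \<in> F}"
proof -
  have [measurable]: "F \<in> sets borel"
    using \<open>closed F\<close> by (rule borel_closed)
  have [measurable]: "outer_cutoff F k \<in> borel_measurable borel" for k
    by (intro borel_measurable_continuous_onI continuous_intros)
  have cutoff_lim: "(\<lambda>k. \<integral>x. h x * outer_cutoff F k (Y x) \<partial>M) \<longlonglongrightarrow> (\<integral>x. h x * indicator F (Y x) \<partial>M)"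
    if [measurable]: "h \<in> borel_measurable M" and h: "\<And>x. \<bar>h x\<bar> \<le> 1" for h
  proof (rule integral_dominated_convergence[where w="\<lambda>_. 1"])
    show "AE x in M. (\<lambda>k. h x * outer_cutoff F k (Y x)) \<longlonglongrightarrow> h x * indicator F (Y x)"
      using outer_cutoff_tendsto[of F] \<open>closed F\<close> by (intro AE_I2 tendsto_intros) (simp add: closure_closed)
    show "AE x in M. norm (h x * outer_cutoff F k (Y x)) \<le> 1" for k
      using h outer_cutoff_nonneg[of F k] outer_cutoff_le_one[of F k]
      by (intro AE_I2) (simp add: abs_mult mult_le_one)
  qed measurable
  have "continuous_on UNIV (outer_cutoff F k)" "bounded (range (outer_cutoff F k))" for k
    using outer_cutoff_nonneg[of F k] outer_cutoff_le_one[of F k]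
    unfolding bounded_iff by (auto intro!: continuous_intros exI[of _ 1])
  note factor_cutoff = factor[OF this]
  have "(\<lambda>k. \<integral>x. indicator E (X x) * outer_cutoff F k (Y x) \<partial>M)
      \<longlonglongrightarrow> prob {x \<in> space M. X x \<in> E} * (\<integral>x. indicator F (Y x) \<partial>M)"
    unfolding factor_cutoff using cutoff_lim[of "\<lambda>_. 1"] by (simp add: tendsto_mult_left)
  moreover have "(\<lambda>k. \<integral>x. indicator E (X x) * outer_cutoff F k (Y x) \<partial>M)
      \<longlonglongrightarrow> (\<integral>x. indicator E (X x) * indicator F (Y x) \<partial>M)"
    by (rule cutoff_lim) simp_all
  ultimately have "(\<integral>x. indicator E (X x) * indicator F (Y x) \<partial>M)
      = prob {x \<in> space M. X x \<in> E} * (\<integral>x. indicator F (Y x) \<partial>M)"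
    by (rule LIMSEQ_unique[rotated])
  moreover have "(\<integral>x. indicator E (X x) * indicator F (Y x) \<partial>M) = prob {x \<in> space M. X x \<in> E \<and> Y x \<in> F}"
    using integral_indicator_comp[where A="E \<times> F" and X="\<lambda>x. (X x, Y x)" and M=M]
    by (simp add: indicator_times)
  ultimately show ?thesis
    by (simp add: integral_indicator_comp)
qed

lemma sigma_sets_vimage_generators:
  assumes X: "X \<in> measurable M N" and G: "sigma_sets (space N) G = sets N"
  shows "sigma_sets (space M) {X -` A \<inter> space M | A. A \<in> sets N}
    = sigma_sets (space M) {X -` A \<inter> space M | A. A \<in> G}"
proof -
  have "{X -` A \<inter> space M | A. A \<in> sets N} = sigma_sets (space M) {X -` A \<inter> space M | A. A \<in> G}"
    unfolding G[symmetric] using measurable_space[OF X] by (intro sigma_sets_vimage_commute) auto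
  moreover have "{X -` A \<inter> space M | A. A \<in> G} \<subseteq> Pow (space M)"
    by auto
  ultimately show ?thesis
    by (simp add: sigma_sets_sigma_sets_eq)
qed

lemma Int_stable_vimage:
  assumes "Int_stable G"
  shows "Int_stable {X -` A \<inter> S | A. A \<in> G}"
proof (rule Int_stableI)
  fix a b assume "a \<in> {X -` A \<inter> S | A. A \<in> G}" "b \<in> {X -` A \<inter> S | A. A \<in> G}"
  then obtain A B where "A \<in> G" "B \<in> G" and ab: "a \<inter> b = X -` (A \<inter> B) \<inter> S"
    by auto
  have "A \<inter> B \<in> G"
    using assms \<open>A \<in> G\<close> \<open>B \<in> G\<close> by (rule Int_stableD)
  then show "a \<inter> b \<in> {X -` A \<inter> S | A. A \<in> G}"
    unfolding ab by blast
qed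

lemma (in prob_space) indep_set_vimage_generators:
  assumes X: "X \<in> measurable M N1" and Y: "Y \<in> measurable M N2"
    and G: "Int_stable G" "sigma_sets (space N1) G = sets N1"
    and H: "Int_stable H" "sigma_sets (space N2) H = sets N2"
    and factor: "\<And>A B. A \<in> G \<Longrightarrow> B \<in> H \<Longrightarrow> prob {x \<in> space M. X x \<in> A \<and> Y x \<in> B}
      = prob {x \<in> space M. X x \<in> A} * prob {x \<in> space M. Y x \<in> B}"
  shows "indep_set (sigma_sets (space M) {X -` A \<inter> space M | A. A \<in> sets N1})
    (sigma_sets (space M) {Y -` A \<inter> space M | A. A \<in> sets N2})"
  unfolding sigma_sets_vimage_generators[OF X G(2)] sigma_sets_vimage_generators[OF Y H(2)]
proof (rule indep_set_sigma_sets)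
  have "G \<subseteq> sets N1" "H \<subseteq> sets N2"
    using G(2) H(2) by (auto intro: sigma_sets.Basic)
  show "indep_set {X -` A \<inter> space M | A. A \<in> G} {Y -` A \<inter> space M | A. A \<in> H}"
  proof (rule indep_setI)
    show "{X -` A \<inter> space M | A. A \<in> G} \<subseteq> events"
      using \<open>G \<subseteq> sets N1\<close> measurable_sets[OF X] by blast
    show "{Y -` A \<inter> space M | A. A \<in> H} \<subseteq> events"
      using \<open>H \<subseteq> sets N2\<close> measurable_sets[OF Y] by blast
  next
    fix a b assume "a \<in> {X -` A \<inter> space M | A. A \<in> G}" "b \<in> {Y -` A \<inter> space M | A. A \<in> H}"
    then obtain A B where "A \<in> G" "B \<in> H" "a = X -` A \<inter> space M" "b = Y -` B \<inter> space M"
      by blast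
    moreover have "a = {x \<in> space M. X x \<in> A}" "b = {x \<in> space M. Y x \<in> B}"
      "a \<inter> b = {x \<in> space M. X x \<in> A \<and> Y x \<in> B}"
      using calculation by auto
    ultimately show "prob (a \<inter> b) = prob a * prob b"
      using factor by simp
  qed
  show "Int_stable {X -` A \<inter> space M | A. A \<in> G}"
    using G(1) by (rule Int_stable_vimage)
  show "Int_stable {Y -` A \<inter> space M | A. A \<in> H}"
    using H(1) by (rule Int_stable_vimage)
qed

theorem mainTheorem11:
  fixes \<nu> :: "nat \<Rightarrow> 'x measure" and M :: "'x measure"
    and Rl :: "nat \<Rightarrow> 'x \<Rightarrow> 'e::{metric_space, second_countable_topology}"
    and Rl' :: "nat \<Rightarrow> 'x \<Rightarrow> 'f::{metric_space, second_countable_topology}"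
    and P :: "'w measure" and R :: "'w \<Rightarrow> 'e" and R' :: "'w \<Rightarrow> 'f"
    and Bpi :: "'e set set"
  assumes compE: "compact (UNIV :: 'e set)"
    and compE': "compact (UNIV :: 'f set)"
    and prob_nu: "\<And>l. prob_space (\<nu> l)"
    and sets_nu: "\<And>l. sets (\<nu> l) = sets M"
    and meas_Rl: "\<And>l. Rl l \<in> borel_measurable (\<nu> l)"
    and meas_Rl': "\<And>l. Rl' l \<in> borel_measurable (\<nu> l)"
    and prob_P: "prob_space P"
    and meas_R: "R \<in> borel_measurable P"
    and meas_R': "R' \<in> borel_measurable P"
    and joint_conv: "weak_conv_seq (\<lambda>l. distr (\<nu> l) borel (\<lambda>x. (Rl l x, Rl' l x)))
                                   (distr P borel (\<lambda>w. (R w, R' w)))"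
    and pi_system: "Int_stable Bpi"
    and generates: "sigma_sets UNIV Bpi = sets (borel :: 'e measure)"
    and boundary: "\<And>E. E \<in> Bpi \<Longrightarrow> measure P {w \<in> space P. R w \<in> frontier E} = 0"
    and cond_conv: "\<And>E. E \<in> Bpi \<Longrightarrow> measure P {w \<in> space P. R w \<in> E} > 0 \<Longrightarrow>
        weak_conv_seq (\<lambda>l. distr (cond_measure (\<nu> l) {x \<in> space (\<nu> l). Rl l x \<in> E}) borel (Rl' l))
                      (distr P borel R')"
  shows "prob_space.indep_set P
           (sigma_sets (space P) {R -` A \<inter> space P | A. A \<in> sets (borel :: 'e measure)})
           (sigma_sets (space P) {R' -` A \<inter> space P | A. A \<in> sets (borel :: 'f measure)})"
proof -
  interpret P: prob_space P by (rule prob_P)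
  have Bpi_borel: "E \<in> sets borel" if "E \<in> Bpi" for E
    using that generates by (auto intro: sigma_sets.Basic)
  have "P.prob {w \<in> space P. R w \<in> E \<and> R' w \<in> F}
      = P.prob {w \<in> space P. R w \<in> E} * P.prob {w \<in> space P. R' w \<in> F}"
    if "E \<in> Bpi" "closed F" for E F
    using meas_R meas_R' Bpi_borel[OF \<open>E \<in> Bpi\<close>] \<open>closed F\<close>
  proof (rule P.prob_vimage_closed_factorizes)
    show "(\<integral>w. indicator E (R w) * g (R' w) \<partial>P) = P.prob {w \<in> space P. R w \<in> E} * (\<integral>w. g (R' w) \<partial>P)"
      if "continuous_on UNIV g" "bounded (range g)" for g
      using prob_nu prob_P meas_Rl meas_Rl' meas_R meas_R' joint_conv Bpi_borel[OF \<open>E \<in> Bpi\<close>]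
        boundary[OF \<open>E \<in> Bpi\<close>] cond_conv[OF \<open>E \<in> Bpi\<close>] that
      by (rule integral_indicator_mult_factorizes)
  qed
  moreover have "sigma_sets UNIV (Collect closed) = sets (borel :: 'f measure)"
    by (simp add: borel_eq_closed)
  ultimately show ?thesis
    using meas_R meas_R' pi_system generates
    by (intro P.indep_set_vimage_generators[where H="Collect closed"])
      (auto simp: Int_stable_def)
qed

end
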